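(* There exists $C\in(1,\infty)$ such that for all $m,n,k\in\mathbb N$, $$\P\big(\tau^{(m)}_k\ge n\big)\le\Big(\frac{C\,k\,m}{n(\log m+1)}\wedge1\Big)^{n/m}.$$ Equivalently, for all $m\in\mathbb N$ and $s,t\in(0,\infty)$, $\P\big(\tau^{(m)}_{\lfloor s(\log m+1)\rfloor}\ge tm\big)\le e^{-t\log^+(\frac{t}{Cs})}$.
   Context: Positive reals $r(n)=\frac an(1+o(1))$, $a\in(0,\infty)$, $R_m=\sum_{n\le m}r(n)$; $(T^{(m)}_i)$ i.i.d. with $\P(T^{(m)}_i=n)=\frac{r(n)}{R_m}\mathbf1_{\{1,\dots,m\}}(n)$; $\tau^{(m)}_k=\sum_{i\le k}T^{(m)}_i$. $\log^+x=\max(\log x,0)$. *)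

theory Defs
  imports "HOL-Probability.Probability" "HOL-Library.Landau_Symbols"
begin

definition Rsum :: "(nat \<Rightarrow> real) \<Rightarrow> nat \<Rightarrow> real" where
  "Rsum r m = (\<Sum>n=1..m. r n)"

definition T_pmf :: "(nat \<Rightarrow> real) \<Rightarrow> nat \<Rightarrow> nat pmf" where
  "T_pmf r m = embed_pmf (\<lambda>n. if n \<in> {1..m} then r n / Rsum r m else 0)"

text \<open>Law of tau^(m)_k = T_1 + ... + T_k with T_i i.i.d. of law T_pmf r m.\<close>
primrec tau_pmf :: "(nat \<Rightarrow> real) \<Rightarrow> nat \<Rightarrow> nat \<Rightarrow> nat pmf" where
  "tau_pmf r m 0 = return_pmf 0"
| "tau_pmf r m (Suc k) = bind_pmf (tau_pmf r m k) (\<lambda>s. map_pmf (\<lambda>t. s + t) (T_pmf r m))"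

end

theory Submission
  imports Defs
begin

text \<open>
  Chernoff's bound with parameter \<open>L/m\<close> gives \<open>P(\<tau>\<^sub>k \<ge> n) \<le> exp(-L n/m) M(L/m)\<^sup>k\<close>, where \<open>M\<close> is
  the moment generating function of \<open>T\<close>. Since \<open>r(j) j\<close> is bounded above and below by positive
  constants, \<open>R\<^sub>m\<close> is of order \<open>log m + 1\<close>, and splitting \<open>\<Sum>\<^sub>j (exp(L j/m) - 1)/j\<close> at \<open>j = m/2\<close>
  gives \<open>M(L/m) \<le> 1 + B exp(L)/((log m + 1) L)\<close> for \<open>1 \<le> L \<le> m\<close>. Writing
  \<open>y = k m/(n (log m + 1))\<close> and choosing \<open>exp(L) = 1/(B y)\<close>, the exponent is at most
  \<open>(n/m)(1 - L) = (n/m) log(e B y)\<close>, which is the claimed bound with \<open>C = e B\<close>.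
\<close>

lemma sum_exp_le:
  fixes l :: real
  assumes l: "l > 0" and m: "m \<ge> 1"
  shows "(\<Sum>j=1..m. exp (l * real j)) \<le> exp (l * real m) * (1 + l) / l"
proof -
  define x where "x = exp l"
  define G where "G = (\<Sum>j=1..m. exp (l * real j))"
  have G: "G = (\<Sum>j=1..m. x ^ j)"
    unfolding G_def x_def by (intro sum.cong) (auto simp: mult.commute simp flip: exp_of_nat_mult)
  have "(x - 1) * G = x * x ^ m - x"
    using sum_gp_multiplied[of 1 m x] m unfolding G by (simp add: algebra_simps)
  also have "x ^ m = exp (l * real m)" by (simp add: x_def mult.commute flip: exp_of_nat_mult)
  finally have gp: "(x - 1) * G \<le> x * exp (l * real m)" using x_def by simp
  have "l * x / (1 + l) \<le> x - 1"
    using exp_ge_add_one_self[of l] l by (simp add: x_def field_simps)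
  moreover have "G \<ge> 0" unfolding G_def by (intro sum_nonneg) auto
  ultimately have "x * (l * G / (1 + l)) \<le> x * exp (l * real m)"
    using gp mult_right_mono[of "l * x / (1 + l)" "x - 1" G] by (simp add: field_simps)
  then have "l * G / (1 + l) \<le> exp (l * real m)" by (rule mult_left_le_imp_le) (simp add: x_def)
  then show ?thesis using l unfolding G_def by (simp add: field_simps)
qed

lemma exp_minus_one_le: "u \<ge> 0 \<Longrightarrow> exp u - 1 \<le> u * exp (u::real)"
proof -
  assume u: "u \<ge> 0"
  have "(1 - u) * exp u \<le> exp (-u) * exp u"
    using exp_ge_add_one_self[of "-u"] by (intro mult_right_mono) auto
  then show ?thesis by (simp add: exp_minus field_simps)
qed

lemma sq_le_16_exp_half: "(L::real) \<ge> 0 \<Longrightarrow> L * L \<le> 16 * exp (L / 2)"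
proof -
  assume L: "L \<ge> 0"
  have "(1 + L/4) * (1 + L/4) \<le> exp (L/4) * exp (L/4)"
    using exp_ge_add_one_self[of "L/4"] L by (intro mult_mono) auto
  also have "exp (L/4) * exp (L/4) = exp (L/2)" by (simp flip: exp_add)
  finally show ?thesis using L by (simp add: algebra_simps)
qed

text \<open>Terms with \<open>j > m/2\<close> are controlled by the size of \<open>j\<close>, the others by \<open>e\<^sup>u - 1 \<le> u e\<^sup>u\<close>.\<close>
lemma exp_minus_one_div_le:
  fixes l :: real
  assumes l: "l > 0" and j: "1 \<le> j" "j \<le> m"
  shows "(exp (l * real j) - 1) / real j \<le> 2 * exp (l * real j) / real m + l * exp (l * real m / 2)"
proof (cases "2 * j > m")
  case True
  have "(exp (l * real j) - 1) / real j \<le> exp (l * real j) / real j"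
    using j by (simp add: divide_right_mono)
  also have "\<dots> \<le> 2 * exp (l * real j) / real m"
    using True j by (simp add: field_simps)
  finally have "(exp (l * real j) - 1) / real j \<le> 2 * exp (l * real j) / real m" .
  then show ?thesis using l by (simp add: add_increasing2)
next
  case False
  have "(exp (l * real j) - 1) / real j \<le> (l * real j) * exp (l * real j) / real j"
    using exp_minus_one_le[of "l * real j"] l j by (intro divide_right_mono) auto
  also have "\<dots> = l * exp (l * real j)" using j by simp
  also have "\<dots> \<le> l * exp (l * real m / 2)" using False l by (intro mult_left_mono) auto
  finally have "(exp (l * real j) - 1) / real j \<le> l * exp (l * real m / 2)" .
  then show ?thesis by (simp add: add_increasing)
qed

lemma sum_exp_minus_one_div_le:
  fixes L :: real
  assumes L1: "1 \<le> L" and Lm: "L \<le> real m"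
  shows "(\<Sum>j=1..m. (exp (L / real m * real j) - 1) / real j) \<le> 20 * exp L / L"
proof -
  define l where "l = L / real m"
  have m: "m \<ge> 1" using L1 Lm by simp
  have l: "l > 0" and L: "L = l * real m" using L1 m by (auto simp: l_def)
  have "(\<Sum>j=1..m. (exp (l * real j) - 1) / real j)
      \<le> (\<Sum>j=1..m. 2 * exp (l * real j) / real m + l * exp (L / 2))"
    unfolding L by (intro sum_mono exp_minus_one_div_le l) auto
  also have "\<dots> = 2 / real m * (\<Sum>j=1..m. exp (l * real j)) + L * exp (L / 2)"
    by (simp add: L sum.distrib sum_distrib_left sum_divide_distrib)
  also have "\<dots> \<le> 2 / real m * (exp L * (1 + l) / l) + L * exp (L / 2)"
    using sum_exp_le[OF l m] l unfolding L by (intro add_mono mult_left_mono) auto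
  also have "2 / real m * (exp L * (1 + l) / l) = 2 * exp L * (1 / real m + 1 / L)"
    using m l by (simp add: L field_simps)
  also have "\<dots> \<le> 2 * exp L * (2 / L)"
    using L1 Lm by (intro mult_left_mono) (auto simp: field_simps)
  also have "L * exp (L / 2) \<le> 16 * exp L / L"
  proof -
    have "L * L * exp (L/2) \<le> 16 * exp (L/2) * exp (L/2)"
      using sq_le_16_exp_half[of L] L1 by (intro mult_right_mono) auto
    also have "\<dots> = 16 * exp L" by (simp add: mult.assoc flip: exp_add)
    finally show ?thesis using L1 by (simp add: field_simps)
  qed
  finally show ?thesis using L1 by (simp add: l_def field_simps)
qed

lemma exists_Chernoff_exponent_le:
  fixes B y :: real
  assumes B: "B \<ge> 1" and y_def: "y = real k * real m / (real n * (ln (real m) + 1))"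
    and n: "n \<ge> 1" and n_le: "n \<le> k * m" and eBy: "exp 1 * B * y < 1"
  shows "\<exists>L. 1 \<le> L \<and> L \<le> real m \<and>
    - L * real n / real m + real k * (B * exp L / ((ln (real m) + 1) * L)) \<le> real n / real m * ln (exp 1 * B * y)"
proof -
  have m: "m \<ge> 1" and k: "k \<ge> 1" using n n_le by (cases m; cases k; auto)+
  have ln_m: "ln (real m) \<ge> 0" using m by simp
  have "1 \<le> real k * real m / real n"
    using n_le n by (simp flip: of_nat_mult)
  then have "1 / (ln (real m) + 1) \<le> real k * real m / real n / (ln (real m) + 1)"
    using ln_m by (intro divide_right_mono) auto
  then have y_ge: "1 / (ln (real m) + 1) \<le> y" by (simp add: y_def)
  moreover have "0 < 1 / (ln (real m) + 1)" using ln_m by simp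
  ultimately have y: "y > 0" by linarith
  have By_ge: "1 / (ln (real m) + 1) \<le> B * y"
    using y_ge y B mult_right_mono[of 1 B y] by linarith
  have By: "B * y > 0" using y B by simp
  define L where "L = - ln (B * y)"
  have exp_L: "exp L = 1 / (B * y)" using By by (simp add: L_def exp_minus inverse_eq_divide)
  have ln_eBy: "ln (exp 1 * B * y) = 1 - L" using y B by (simp add: L_def ln_mult mult.assoc)
  have "ln (exp 1 * B * y) < 0" using eBy By by (simp add: mult.assoc)
  then have L1: "1 \<le> L" using ln_eBy by linarith
  have "exp L \<le> ln (real m) + 1" using By_ge By ln_m unfolding exp_L by (simp add: field_simps)
  then have "L \<le> ln (ln (real m) + 1)" using ln_m by (subst ln_ge_iff) auto
  also have "\<dots> \<le> ln (real m)" using ln_le_minus_one[of "ln (real m) + 1"] ln_m by simp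
  also have "\<dots> \<le> real m" using ln_le_minus_one[of "real m"] m by simp
  finally have Lm: "L \<le> real m" .
  have y_ln: "y * (ln (real m) + 1) = real k * real m / real n" using ln_m by (simp add: y_def)
  have "real k * (B * exp L / ((ln (real m) + 1) * L)) = real k / (y * (ln (real m) + 1) * L)"
    using B y L1 ln_m unfolding exp_L by (simp add: field_simps)
  also have "\<dots> = real n / real m / L" unfolding y_ln using k m n L1 by (simp add: field_simps)
  also have "\<dots> \<le> real n / real m"
    using divide_left_mono[of 1 L "real n / real m"] L1 by simp
  finally have "real k * (B * exp L / ((ln (real m) + 1) * L)) \<le> real n / real m" .
  moreover have "real n / real m * ln (exp 1 * B * y) = real n / real m - L * real n / real m"
    unfolding ln_eBy using m by (simp add: field_simps)
  ultimately show ?thesis using L1 Lm by (intro exI[of _ L]) simp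
qed

lemma tendsto_pos_imp_bounds:
  fixes f :: "nat \<Rightarrow> real"
  assumes pos: "\<And>n. n \<ge> 1 \<Longrightarrow> f n > 0" and lim: "f \<longlonglongrightarrow> c" and c: "c > 0"
  shows "\<exists>b B. b > 0 \<and> (\<forall>n\<ge>1. b \<le> f n \<and> f n \<le> B)"
proof -
  have lim': "(\<lambda>n. f (Suc n)) \<longlonglongrightarrow> c" using LIMSEQ_Suc[OF lim] .
  obtain B where "B > 0" and B: "\<forall>n. norm (f (Suc n)) \<le> B"
    by (rule BseqE[OF convergent_imp_Bseq[OF convergentI[OF lim']]])
  have "(\<lambda>n. inverse (f (Suc n))) \<longlonglongrightarrow> inverse c" using tendsto_inverse[OF lim'] c by simp
  then obtain K where K: "K > 0" "\<forall>n. norm (inverse (f (Suc n))) \<le> K"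
    by (rule BseqE[OF convergent_imp_Bseq[OF convergentI]])
  have "1 / K \<le> f (Suc n) \<and> f (Suc n) \<le> B" for n
    using K(1) K(2)[rule_format, of n] B[rule_format, of n] pos[of "Suc n"] by (auto simp: field_simps)
  then have "\<forall>n\<ge>1. 1 / K \<le> f n \<and> f n \<le> B" by (auto dest!: Suc_le_D)
  with K(1) show ?thesis by (intro exI[of _ "1 / K"] exI[of _ B]) simp
qed

lemma asymp_equiv_inverse_imp_tendsto:
  fixes r :: "nat \<Rightarrow> real"
  assumes "r \<sim>[at_top] (\<lambda>n. a / real n)"
  shows "(\<lambda>n. r n * real n) \<longlonglongrightarrow> a"
proof (rule asymp_equiv_tendsto_transfer)
  show "(\<lambda>n. a / real n * real n) \<sim>[at_top] (\<lambda>n. r n * real n)"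
    by (rule asymp_equiv_mult[OF asymp_equiv_symI[OF assms] asymp_equiv_refl])
  have ev: "eventually (\<lambda>n. a / real n * real n = a) at_top"
    using eventually_gt_at_top[of 0] by eventually_elim simp
  show "(\<lambda>n. a / real n * real n) \<longlonglongrightarrow> a" by (rule tendsto_cong[OF ev, THEN iffD2]) simp
qed

definition T_mgf :: "(nat \<Rightarrow> real) \<Rightarrow> nat \<Rightarrow> real \<Rightarrow> real" where
  "T_mgf r m l = (\<Sum>j=1..m. r j / Rsum r m * exp (l * real j))"

context
  fixes r :: "nat \<Rightarrow> real"
  assumes r_pos: "\<And>n. n \<ge> 1 \<Longrightarrow> r n > 0"
begin

lemma Rsum_pos: "m \<ge> 1 \<Longrightarrow> Rsum r m > 0"
  unfolding Rsum_def using r_pos by (intro sum_pos) auto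

lemma sum_T_weights: "m \<ge> 1 \<Longrightarrow> (\<Sum>j=1..m. r j / Rsum r m) = 1"
  using Rsum_pos[of m] by (simp add: Rsum_def flip: sum_divide_distrib)

lemma T_weight_nonneg: "m \<ge> 1 \<Longrightarrow> j \<ge> 1 \<Longrightarrow> 0 \<le> r j / Rsum r m"
  using Rsum_pos r_pos by (simp add: less_imp_le)

lemma pmf_T_pmf:
  assumes m: "m \<ge> 1"
  shows "pmf (T_pmf r m) j = (if j \<in> {1..m} then r j / Rsum r m else 0)"
proof -
  let ?f = "\<lambda>n. if n \<in> {1..m} then r n / Rsum r m else 0"
  have nonneg: "\<And>x. 0 \<le> ?f x" using T_weight_nonneg[OF m] by auto
  have "(\<integral>\<^sup>+x. ennreal (?f x) \<partial>count_space UNIV) = (\<integral>\<^sup>+x. ennreal (?f x) \<partial>count_space {1..m})"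
    by (subst nn_integral_count_space_indicator) (auto intro!: nn_integral_cong split: split_indicator)
  also have "\<dots> = ennreal (\<Sum>n\<in>{1..m}. r n / Rsum r m)"
    using T_weight_nonneg[OF m] by (subst nn_integral_count_space_finite) (auto intro: sum_ennreal)
  also have "\<dots> = 1"
    using sum_T_weights[OF m] by simp
  finally have "(\<integral>\<^sup>+x. ennreal (?f x) \<partial>count_space UNIV) = 1" .
  from pmf_embed_pmf[OF nonneg this] show ?thesis unfolding T_pmf_def by simp
qed

lemma set_pmf_T_pmf: "m \<ge> 1 \<Longrightarrow> set_pmf (T_pmf r m) = {1..m}"
  using pmf_T_pmf Rsum_pos r_pos by (auto simp: set_pmf_eq less_imp_neq[symmetric])

lemma set_pmf_tau_pmf_le: "m \<ge> 1 \<Longrightarrow> x \<in> set_pmf (tau_pmf r m k) \<Longrightarrow> x \<le> k * m"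
proof (induction k arbitrary: x)
  case (Suc k)
  from Suc.prems(2) obtain s t where "s \<in> set_pmf (tau_pmf r m k)" "t \<in> set_pmf (T_pmf r m)" "x = s + t"
    by auto
  with Suc.IH[of s] set_pmf_T_pmf[OF Suc.prems(1)] Suc.prems(1) show ?case by (simp add: add.commute)
qed simp

lemma prob_tau_pmf_ge_eq_0: "m \<ge> 1 \<Longrightarrow> k * m < n \<Longrightarrow> measure_pmf.prob (tau_pmf r m k) {n..} = 0"
  unfolding measure_pmf_zero_iff using set_pmf_tau_pmf_le by fastforce

lemma nn_integral_exp_T_pmf:
  assumes m: "m \<ge> 1"
  shows "(\<integral>\<^sup>+x. ennreal (exp (l * real x)) \<partial>measure_pmf (T_pmf r m)) = ennreal (T_mgf r m l)"
proof -
  have "(\<integral>\<^sup>+x. ennreal (exp (l * real x)) \<partial>measure_pmf (T_pmf r m))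
     = (\<Sum>x\<in>{1..m}. ennreal (exp (l * real x)) * pmf (T_pmf r m) x)"
    by (subst nn_integral_measure_pmf_finite) (auto simp: set_pmf_T_pmf[OF m])
  also have "\<dots> = (\<Sum>x\<in>{1..m}. ennreal (r x / Rsum r m * exp (l * real x)))"
    using Rsum_pos[OF m] r_pos
    by (intro sum.cong) (auto simp: pmf_T_pmf[OF m] ennreal_mult'[symmetric] mult.commute)
  also have "\<dots> = ennreal (T_mgf r m l)"
    unfolding T_mgf_def using Rsum_pos[OF m] r_pos
    by (subst sum_ennreal) (auto intro!: divide_nonneg_pos mult_nonneg_nonneg less_imp_le)
  finally show ?thesis .
qed

lemma T_mgf_nonneg: "m \<ge> 1 \<Longrightarrow> T_mgf r m l \<ge> 0"
  unfolding T_mgf_def using T_weight_nonneg by (intro sum_nonneg mult_nonneg_nonneg) auto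

lemma nn_integral_exp_tau_pmf:
  assumes m: "m \<ge> 1"
  shows "(\<integral>\<^sup>+x. ennreal (exp (l * real x)) \<partial>measure_pmf (tau_pmf r m k)) = ennreal (T_mgf r m l ^ k)"
proof (induction k)
  case (Suc k)
  have "(\<integral>\<^sup>+x. ennreal (exp (l * real x)) \<partial>measure_pmf (tau_pmf r m (Suc k)))
    = (\<integral>\<^sup>+s. (\<integral>\<^sup>+t. ennreal (exp (l * real s)) * ennreal (exp (l * real t))
          \<partial>measure_pmf (T_pmf r m)) \<partial>measure_pmf (tau_pmf r m k))"
    by (simp add: ennreal_mult'[symmetric] exp_add[symmetric] algebra_simps)
  also have "\<dots> = ennreal (T_mgf r m l ^ k) * ennreal (T_mgf r m l)"
    by (simp add: nn_integral_cmult nn_integral_multc nn_integral_exp_T_pmf[OF m] Suc)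
  also have "\<dots> = ennreal (T_mgf r m l ^ Suc k)"
    using T_mgf_nonneg[OF m] by (simp add: ennreal_mult'[symmetric] mult.commute)
  finally show ?case .
qed simp

lemma prob_tau_pmf_ge_le_mgf:
  assumes m: "m \<ge> 1" and l: "l > 0"
  shows "measure_pmf.prob (tau_pmf r m k) {n..} \<le> exp (- l * real n) * T_mgf r m l ^ k"
proof -
  have "emeasure (measure_pmf (tau_pmf r m k)) {x\<in>UNIV. real x \<ge> real n}
      \<le> ennreal (exp (- l * real n)) *
        (\<integral>\<^sup>+x. ennreal (exp (l * real x)) * indicator UNIV x \<partial>measure_pmf (tau_pmf r m k))"
    using l by (intro Chernoff_ineq_nn_integral_ge) auto
  also have "\<dots> = ennreal (exp (- l * real n) * T_mgf r m l ^ k)"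
    using nn_integral_exp_tau_pmf[OF m] by (simp add: ennreal_mult')
  also have "{x\<in>UNIV. real x \<ge> real n} = {n..}" by auto
  finally show ?thesis
    using T_mgf_nonneg[OF m] by (simp add: measure_pmf.emeasure_eq_measure ennreal_le_iff)
qed

context
  fixes c A :: real
  assumes c_pos: "c > 0"
    and r_lower: "\<And>j. j \<ge> 1 \<Longrightarrow> c \<le> r j * real j"
    and r_upper: "\<And>j. j \<ge> 1 \<Longrightarrow> r j * real j \<le> A"
begin

lemma c_le_A: "c \<le> A"
  using r_lower[of 1] r_upper[of 1] by simp

lemma Rsum_ge_ln: "m \<ge> 1 \<Longrightarrow> c * (ln (real m) + 1) / 2 \<le> Rsum r m"
proof -
  assume m: "m \<ge> 1"
  have "ln (real m) \<le> ln (real m + 1)" using m by simp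
  also have "\<dots> \<le> harm m" by (rule ln_le_harm)
  finally have "ln (real m) \<le> harm m" .
  moreover have "1 \<le> (harm m :: real)"
    using harm_mono[OF m, where 'a = real] by (simp add: harm_def)
  ultimately have "c * (ln (real m) + 1) / 2 \<le> c * harm m"
    using c_pos by simp
  also have "c * harm m = (\<Sum>j=1..m. c / real j)"
    by (simp add: harm_def sum_distrib_left field_simps)
  also have "\<dots> \<le> Rsum r m"
    unfolding Rsum_def using r_lower by (intro sum_mono) (auto simp: field_simps)
  finally show ?thesis .
qed

lemma T_mgf_le:
  assumes L1: "1 \<le> L" and Lm: "L \<le> real m"
  shows "T_mgf r m (L / real m) \<le> 1 + 40 * A / c * exp L / ((ln (real m) + 1) * L)"
proof -
  have m: "m \<ge> 1" using L1 Lm by simp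
  have R: "Rsum r m > 0" using Rsum_pos[OF m] .
  have A: "A > 0" using c_le_A c_pos by simp
  have "ln (real m) \<ge> 0" using m by simp
  then have ln_m: "ln (real m) + 1 > 0" by simp
  let ?d = "\<lambda>j. exp (L / real m * real j) - 1"
  have "T_mgf r m (L / real m) = (\<Sum>j=1..m. r j / Rsum r m) + (\<Sum>j=1..m. r j / Rsum r m * ?d j)"
    unfolding T_mgf_def by (simp add: algebra_simps flip: sum.distrib)
  also have "(\<Sum>j=1..m. r j / Rsum r m * ?d j) \<le> (\<Sum>j=1..m. A / Rsum r m * (?d j / real j))"
  proof (intro sum_mono)
    fix j assume j: "j \<in> {1..m}"
    have "r j \<le> A / real j" using r_upper[of j] j by (simp add: field_simps)
    moreover have "?d j \<ge> 0" using L1 by simp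
    ultimately have "r j / Rsum r m * ?d j \<le> A / real j / Rsum r m * ?d j"
      using R by (intro mult_right_mono divide_right_mono) auto
    then show "r j / Rsum r m * ?d j \<le> A / Rsum r m * (?d j / real j)"
      by (simp add: field_simps)
  qed
  also have "\<dots> = A / Rsum r m * (\<Sum>j=1..m. ?d j / real j)"
    by (simp add: sum_distrib_left)
  also have "\<dots> \<le> A / Rsum r m * (20 * exp L / L)"
    using sum_exp_minus_one_div_le[OF L1 Lm] A R by (intro mult_left_mono) auto
  also have "\<dots> \<le> A / (c * (ln (real m) + 1) / 2) * (20 * exp L / L)"
    using Rsum_ge_ln[OF m] A L1 c_pos ln_m R
    by (intro mult_right_mono divide_left_mono) auto
  also have "\<dots> = 40 * A / c * exp L / ((ln (real m) + 1) * L)"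
    using c_pos ln_m L1 by (simp add: field_simps)
  finally show ?thesis using sum_T_weights[OF m] by simp
qed


lemma prob_tau_pmf_ge_le_exp:
  assumes L1: "1 \<le> L" and Lm: "L \<le> real m"
  shows "measure_pmf.prob (tau_pmf r m k) {n..}
    \<le> exp (- L * real n / real m + real k * (40 * A / c * exp L / ((ln (real m) + 1) * L)))"
proof -
  have m: "m \<ge> 1" using L1 Lm by simp
  define X where "X = 40 * A / c * exp L / ((ln (real m) + 1) * L)"
  have "T_mgf r m (L / real m) \<le> exp X"
    using T_mgf_le[OF L1 Lm] exp_ge_add_one_self[of X] unfolding X_def by linarith
  then have mgf_k: "T_mgf r m (L / real m) ^ k \<le> exp X ^ k"
    using T_mgf_nonneg[OF m] by (intro power_mono)
  have "measure_pmf.prob (tau_pmf r m k) {n..} \<le> exp (- (L / real m) * real n) * T_mgf r m (L / real m) ^ k"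
    using L1 m by (intro prob_tau_pmf_ge_le_mgf m) auto
  also have "\<dots> \<le> exp (- (L / real m) * real n) * exp X ^ k"
    using mgf_k by (intro mult_left_mono) auto
  also have "\<dots> = exp (- L * real n / real m + real k * X)"
    by (simp add: exp_of_nat_mult[symmetric] mult.commute flip: exp_add)
  finally show ?thesis unfolding X_def .
qed

lemma prob_tau_pmf_ge_le:
  assumes m: "m \<ge> 1" and n: "n \<ge> 1"
  shows "measure_pmf.prob (tau_pmf r m k) {n..}
    \<le> (min (exp 1 * (40 * A / c) * real k * real m / (real n * (ln (real m) + 1))) 1) powr (real n / real m)"
proof -
  define B where "B = 40 * A / c"
  define y where "y = real k * real m / (real n * (ln (real m) + 1))"
  have B: "B \<ge> 1" using c_le_A c_pos by (simp add: B_def field_simps)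
  have rhs: "exp 1 * (40 * A / c) * real k * real m / (real n * (ln (real m) + 1)) = exp 1 * B * y"
    by (simp add: B_def y_def)
  consider (trivial) "1 \<le> exp 1 * B * y" | (empty) "k * m < n" | (main) "exp 1 * B * y < 1" "n \<le> k * m"
    by linarith
  then show ?thesis
  proof cases
    case trivial
    then show ?thesis unfolding rhs by (simp add: measure_pmf.prob_le_1)
  next
    case empty
    then show ?thesis by (simp add: prob_tau_pmf_ge_eq_0[OF m])
  next
    case main
    obtain L where L: "1 \<le> L" "L \<le> real m"
      and exponent: "- L * real n / real m + real k * (B * exp L / ((ln (real m) + 1) * L))
        \<le> real n / real m * ln (exp 1 * B * y)"
      using exists_Chernoff_exponent_le[OF B y_def n main(2) main(1)] by blast
    have "k \<ge> 1" using main(2) n by (cases k) auto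
    then have y: "y > 0" unfolding y_def using m n by (intro divide_pos_pos mult_pos_pos add_nonneg_pos) auto
    have "measure_pmf.prob (tau_pmf r m k) {n..} \<le> exp (real n / real m * ln (exp 1 * B * y))"
      using exponent by (intro order.trans[OF prob_tau_pmf_ge_le_exp[OF L, of k n, folded B_def]]) simp
    also have "\<dots> = (min (exp 1 * B * y) 1) powr (real n / real m)"
      using main(1) B y by (simp add: powr_def)
    finally show ?thesis unfolding rhs .
  qed
qed

end

end

theorem mainTheorem14:
  fixes r :: "nat \<Rightarrow> real" and a :: real
  assumes r_pos: "\<And>n. n \<ge> 1 \<Longrightarrow> r n > 0"
    and a_pos: "a > 0"
    and r_asymp: "r \<sim>[at_top] (\<lambda>n. a / real n)"
  shows "\<exists>C::real. C > 1 \<and>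
    (\<forall>m n k :: nat. m \<ge> 1 \<longrightarrow> n \<ge> 1 \<longrightarrow> k \<ge> 1 \<longrightarrow>
      measure_pmf.prob (tau_pmf r m k) {n..}
        \<le> (min (C * real k * real m / (real n * (ln (real m) + 1))) 1) powr (real n / real m))"
proof -
  have "\<And>n. n \<ge> 1 \<Longrightarrow> r n * real n > 0" using r_pos by simp
  then obtain c A where c: "c > 0" and bounds: "\<forall>j\<ge>1. c \<le> r j * real j \<and> r j * real j \<le> A"
    using tendsto_pos_imp_bounds[OF _ asymp_equiv_inverse_imp_tendsto[OF r_asymp] a_pos] by blast
  have tail: "measure_pmf.prob (tau_pmf r m k) {n..}
      \<le> (min (exp 1 * (40 * A / c) * real k * real m / (real n * (ln (real m) + 1))) 1) powr (real n / real m)"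
    if "m \<ge> 1" "n \<ge> 1" for m n k
    using prob_tau_pmf_ge_le[of r c A m n k] r_pos c bounds that by blast
  have "1 \<le> 40 * A / c" using bounds[rule_format, of 1] c by (simp add: field_simps)
  then have "1 < exp 1 * (40 * A / c)"
    using mult_less_le_imp_less[of 1 "exp 1" 1 "40 * A / c"] by (simp del: times_divide_eq_right)
  with tail show ?thesis by blast
qed

end
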